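(* Suppose $\mathit{Act}$ is finite and $|\mathit{Act}|\ge2$. Then $\mathcal{E}_{\omega,f}'=\mathcal{E}_\omega\cup\mathcal{E}_{v,f}'$ is complete for $\simeq_\omega$ over open monitors: for all monitors $m,n$, if $m\simeq_\omega n$ then $\mathcal{E}_{\omega,f}'\vdash m=n$.
   Context: Monitors: terms $m,n ::= v \mid a.m \mid m+n \mid x$ over a finite action set $\mathit{Act}$ and variables $x$, verdicts $v::=\mathit{end}\mid\mathit{yes}\mid\mathit{no}$. $\sum_{i\in I}m_i$ is $\mathit{end}$ for $I=\emptyset$. Semantics: $\xrightarrow{\alpha}$ ($\alpha\in\mathit{Act}\cup\{\tau\}$) is the least relation with $a.m\xrightarrow{a}m$; $m\xrightarrow{\alpha}m'$ implies $m+n\xrightarrow{\alpha}m'$ and $n+m\xrightarrow{\alpha}m'$; $v\xrightarrow{\alpha}v$ for verdicts $v$. Weak transitions: $m\xRightarrow{\varepsilon}m'$ iff $m(\xrightarrow{\tau})^*m'$; $m\xRightarrow{a}m'$ iff $m\xRightarrow{\varepsilon}\xrightarrow{a}\xRightarrow{\varepsilon}m'$; $m\xRightarrow{as'}m'$ ($s'\ne\varepsilon$) iff $m\xRightarrow{a}m_1\xRightarrow{s'}m'$. For closed $m$, $L_a(m)=\{s\mid m\xRightarrow{s}\mathit{yes}\}$, $L_r(m)=\{s\mid m\xRightarrow{s}\mathit{no}\}$; closed $m\simeq_\omega n$ iff $L_a(m)\cdot\mathit{Act}^\omega=L_a(n)\cdot\mathit{Act}^\omega$ and $L_r(m)\cdot\mathit{Act}^\omega=L_r(n)\cdot\mathit{Act}^\omega$;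 for open terms iff $\sigma(m)\simeq_\omega\sigma(n)$ for all closed substitutions $\sigma$. Notation for $s\in\mathit{Act}^*$: $s.m$ is $a_1.(\cdots a_k.m)$ if $s=a_1\dots a_k$ ($\varepsilon.m=m$); $s^1=s$, $s^i=ss^{i-1}$; $\mathit{pre}(s)$ is the set of prefixes of $s$; $\overline{s}^{\le}(m)=\sum_{|s'|\le|s|,\ s'\notin\mathit{pre}(s)}s'.m$; $\overline{s}(m)=\overline{s}^{\le}(m)+s.\sum_{a\in\mathit{Act}}a.m$; $\overline{s}^{(1)}(m)=\overline{s}(m)$ and for $k\ge2$, $\overline{s}^{(k)}(m)=\sum_{1\le i<k-1}s^i.\overline{s}^{\le}(m)+s^{k-1}.\overline{s}(m)$. $\mathcal{E}\vdash m=n$ denotes derivability by reflexivity, symmetry, transitivity, substitution and congruence for $a.\_$ and $+$. $\mathcal{E}_v$: (A1) $x+y=y+x$; (A2) $x+(y+z)=(x+y)+z$; (A3) $x+x=x$; (A4) $x+\mathit{end}=x$; for each $a\in\mathit{Act}$: ($E_a$) $a.\mathit{end}=\mathit{end}$; ($Y_a$) $\mathit{yes}=\mathit{yes}+a.\mathit{yes}$; ($N_a$) $\mathit{no}=\mathit{no}+a.\mathit{no}$; ($D_a$) $a.(x+y)=a.x+a.y$. $\mathcal{E}_\omega=\mathcal{E}_v\cup\{Y_\omega,N_\omega\}$ with ($Y_\omega$) $\mathit{yes}=\sum_{a\in\mathit{Act}}a.\mathit{yes}$, ($N_\omega$) $\mathit{no}=\sum_{a\in\mathit{Act}}a.\mathit{no}$.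 $\mathcal{E}_{v,f}'=\mathcal{E}_v\cup\{O1\}\cup\mathcal{O}$ with (O1) $\mathit{yes}+\mathit{no}=\mathit{yes}+\mathit{no}+x$ and $\mathcal{O}=\{O2_{s,k}\mid s\in\mathit{Act}^*,k\ge1\}$, ($O2_{s,k}$) $x+s.x+\overline{s}^{(k)}(\mathit{yes}+\mathit{no})=x+\overline{s}^{(k)}(\mathit{yes}+\mathit{no})$. *)

theory Defs
  imports Main "HOL-Library.Sublist"
begin

datatype ('a, 'x) mon =
    End | Yes | No
  | Act 'a "('a, 'x) mon"
  | Plus "('a, 'x) mon" "('a, 'x) mon"
  | Var 'x

fun is_verdict :: "('a, 'x) mon \<Rightarrow> bool" where
  "is_verdict End = True"
| "is_verdict Yes = True"
| "is_verdict No = True"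
| "is_verdict _ = False"

fun closed :: "('a, 'x) mon \<Rightarrow> bool" where
  "closed (Var x) = False"
| "closed (Act a m) = closed m"
| "closed (Plus m n) = (closed m \<and> closed n)"
| "closed _ = True"

fun subst :: "('x \<Rightarrow> ('a, 'y) mon) \<Rightarrow> ('a, 'x) mon \<Rightarrow> ('a, 'y) mon" where
  "subst \<sigma> (Var x) = \<sigma> x"
| "subst \<sigma> (Act a m) = Act a (subst \<sigma> m)"
| "subst \<sigma> (Plus m n) = Plus (subst \<sigma> m) (subst \<sigma> n)"
| "subst \<sigma> End = End"
| "subst \<sigma> Yes = Yes"
| "subst \<sigma> No = No"

fun sumL :: "('a, 'x) mon list \<Rightarrow> ('a, 'x) mon" where
  "sumL [] = End"
| "sumL (m # ms) = Plus m (sumL ms)"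

definition sumSet :: "('i \<Rightarrow> ('a, 'x) mon) \<Rightarrow> 'i set \<Rightarrow> ('a, 'x) mon" where
  "sumSet f A = sumL (map f (SOME xs. set xs = A \<and> distinct xs))"

definition pref :: "'a list \<Rightarrow> ('a, 'x) mon \<Rightarrow> ('a, 'x) mon" where
  "pref s m = foldr Act s m"

definition wpow :: "'a list \<Rightarrow> nat \<Rightarrow> 'a list" where
  "wpow s i = concat (replicate i s)"

text \<open>Labels: Some a is action a, None is tau.\<close>
inductive step :: "('a, 'x) mon \<Rightarrow> 'a option \<Rightarrow> ('a, 'x) mon \<Rightarrow> bool" where
  st_act: "step (Act a m) (Some a) m"
| st_sumL: "step m \<alpha> m' \<Longrightarrow> step (Plus m n) \<alpha> m'"
| st_sumR: "step m \<alpha> m' \<Longrightarrow> step (Plus n m) \<alpha> m'"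
| st_verd: "is_verdict v \<Longrightarrow> step v \<alpha> v"

definition tau_star :: "('a, 'x) mon \<Rightarrow> ('a, 'x) mon \<Rightarrow> bool" where
  "tau_star = (\<lambda>m m'. step m None m')\<^sup>*\<^sup>*"

inductive wtrace :: "('a, 'x) mon \<Rightarrow> 'a list \<Rightarrow> ('a, 'x) mon \<Rightarrow> bool" where
  wt_eps: "tau_star m m' \<Longrightarrow> wtrace m [] m'"
| wt_cons: "tau_star m m1 \<Longrightarrow> step m1 (Some a) m2 \<Longrightarrow> wtrace m2 s m' \<Longrightarrow> wtrace m (a # s) m'"

definition La :: "('a, 'x) mon \<Rightarrow> 'a list set" where
  "La m = {s. wtrace m s Yes}"

definition Lr :: "('a, 'x) mon \<Rightarrow> 'a list set" where
  "Lr m = {s. wtrace m s No}"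

text \<open>L . Act^omega, infinite words as functions nat => 'a\<close>
definition omega_ext :: "'a list set \<Rightarrow> (nat \<Rightarrow> 'a) set" where
  "omega_ext L = {w. \<exists>s\<in>L. \<forall>i<length s. w i = s ! i}"

definition omega_eq_closed :: "('a, 'x) mon \<Rightarrow> ('a, 'x) mon \<Rightarrow> bool" where
  "omega_eq_closed m n \<longleftrightarrow>
     omega_ext (La m) = omega_ext (La n) \<and> omega_ext (Lr m) = omega_ext (Lr n)"

definition omega_eq :: "('a, 'x) mon \<Rightarrow> ('a, 'x) mon \<Rightarrow> bool" where
  "omega_eq m n \<longleftrightarrow> (\<forall>\<sigma> :: 'x \<Rightarrow> ('a, 'x) mon. (\<forall>x. closed (\<sigma> x)) \<longrightarrow>
      omega_eq_closed (subst \<sigma> m) (subst \<sigma> n))"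

definition sumAct :: "('a, 'x) mon \<Rightarrow> ('a, 'x) mon" where
  "sumAct m = sumSet (\<lambda>a. Act a m) UNIV"

definition ovle :: "'a list \<Rightarrow> ('a, 'x) mon \<Rightarrow> ('a, 'x) mon" where
  "ovle s m = sumSet (\<lambda>s'. pref s' m) {s'. length s' \<le> length s \<and> \<not> prefix s' s}"

definition ovl :: "'a list \<Rightarrow> ('a, 'x) mon \<Rightarrow> ('a, 'x) mon" where
  "ovl s m = Plus (ovle s m) (pref s (sumAct m))"

definition ovk :: "'a list \<Rightarrow> nat \<Rightarrow> ('a, 'x) mon \<Rightarrow> ('a, 'x) mon" where
  "ovk s k m = (if k \<le> 1 then ovl s m
     else Plus (sumL (map (\<lambda>i. pref (wpow s i) (ovle s m)) [1..<k - 1]))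
               (pref (wpow s (k - 1)) (ovl s m)))"

inductive deriv :: "('a, 'x) mon \<Rightarrow> ('a, 'x) mon \<Rightarrow> bool" where
  refl: "deriv m m"
| sym: "deriv m n \<Longrightarrow> deriv n m"
| trans: "deriv m n \<Longrightarrow> deriv n p \<Longrightarrow> deriv m p"
| subst_rule: "deriv m n \<Longrightarrow> deriv (subst \<sigma> m) (subst \<sigma> n)"
| cong_act: "deriv m n \<Longrightarrow> deriv (Act a m) (Act a n)"
| cong_plus: "deriv m n \<Longrightarrow> deriv m' n' \<Longrightarrow> deriv (Plus m m') (Plus n n')"
| A1: "deriv (Plus x y) (Plus y x)"
| A2: "deriv (Plus x (Plus y z)) (Plus (Plus x y) z)"
| A3: "deriv (Plus x x) x"
| A4: "deriv (Plus x End) x"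
| E_a: "deriv (Act a End) End"
| Y_a: "deriv Yes (Plus Yes (Act a Yes))"
| N_a: "deriv No (Plus No (Act a No))"
| D_a: "deriv (Act a (Plus x y)) (Plus (Act a x) (Act a y))"
| Y_omega: "deriv Yes (sumAct Yes)"
| N_omega: "deriv No (sumAct No)"
| O1: "deriv (Plus Yes No) (Plus (Plus Yes No) x)"
| O2: "k \<ge> 1 \<Longrightarrow> deriv (Plus (Plus x (pref s x)) (ovk s k (Plus Yes No)))
                          (Plus x (ovk s k (Plus Yes No)))"

end

theory Submission
  imports Defs
begin

text \<open>Every monitor is provably the sum of its maximal paths \<open>s.l\<close>, where the leaf \<open>l\<close> is
  \<open>yes\<close>, \<open>no\<close> or a variable. Fix \<open>L\<close> at least the depth of both monitors. With \<open>Y\<^sub>\<omega>\<close> and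
  \<open>N\<^sub>\<omega>\<close> every verdict path \<open>s.v\<close> unfolds into the paths \<open>su.v\<close> with \<open>|su| = L\<close>, and with O1
  a variable path \<open>s.x\<close> disappears as soon as every length-\<open>L\<close> extension of \<open>s\<close> carries both
  \<open>yes\<close> and \<open>no\<close>. The resulting normal form is determined by the \<open>\<omega>\<close>-languages: its verdict
  words by substituting \<open>end\<close> for all variables, its surviving variable paths by substituting
  for the variable a word ending in a marker action \<open>b \<noteq> a\<close>, which needs \<open>|Act| \<ge> 2\<close>.\<close>

definition conclusive :: "('a, 'x) mon \<Rightarrow> bool" where
  "conclusive c \<longleftrightarrow> c = Yes \<or> c = No"

definition verdict_lang :: "('a, 'x) mon \<Rightarrow> ('a, 'x) mon \<Rightarrow> 'a list set" where
  "verdict_lang c m = {s. wtrace m s c}"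

lemma step_Act_cases: "step (Act a p) \<alpha> q \<Longrightarrow> \<alpha> = Some a \<and> q = p"
  by (erule step.cases) auto

lemma step_Plus_cases: "step (Plus p q) \<alpha> r \<Longrightarrow> step p \<alpha> r \<or> step q \<alpha> r"
  by (erule step.cases) auto

lemma step_verdict_cases: "step v \<alpha> r \<Longrightarrow> is_verdict v \<Longrightarrow> r = v"
  by (erule step.cases) auto

lemma tau_star_Act: "tau_star (Act a p) r \<Longrightarrow> r = Act a p"
  unfolding tau_star_def by (induction rule: rtranclp_induct) (auto dest: step_Act_cases)

lemma tau_star_verdict: "tau_star v r \<Longrightarrow> is_verdict v \<Longrightarrow> r = v"
  unfolding tau_star_def by (induction rule: rtranclp_induct) (auto dest: step_verdict_cases)

lemma tau_star_Plus: "tau_star (Plus p q) r \<Longrightarrow> r = Plus p q \<or> tau_star p r \<or> tau_star q r"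
  unfolding tau_star_def
  by (erule converse_rtranclpE) (auto dest!: step_Plus_cases intro: converse_rtranclp_into_rtranclp)

lemma tau_star_refl: "tau_star m m"
  by (simp add: tau_star_def)

lemma wtrace_Act: "wtrace (Act a p) s r \<Longrightarrow> r \<noteq> Act a p \<Longrightarrow> \<exists>s'. s = a # s' \<and> wtrace p s' r"
  by (erule wtrace.cases) (auto dest!: tau_star_Act step_Act_cases)

lemma wtrace_ActI: "wtrace p s r \<Longrightarrow> wtrace (Act a p) (a # s) r"
  by (rule wt_cons[OF tau_star_refl st_act])

lemma wtrace_Plus: "wtrace (Plus p q) s r \<Longrightarrow> r \<noteq> Plus p q \<Longrightarrow> wtrace p s r \<or> wtrace q s r"
proof (induction "Plus p q" s r rule: wtrace.induct)
  case (wt_eps m')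
  then show ?case using tau_star_Plus by (blast intro: wtrace.wt_eps)
next
  case (wt_cons m1 a m2 s m')
  from \<open>tau_star (Plus p q) m1\<close> consider "m1 = Plus p q" | "tau_star p m1" | "tau_star q m1"
    using tau_star_Plus by blast
  then show ?case
  proof cases
    case 1
    then show ?thesis
      using wt_cons step_Plus_cases by (blast intro: wtrace.wt_cons tau_star_refl)
  qed (use wt_cons in \<open>auto intro: wtrace.wt_cons\<close>)
qed

lemma tau_star_lift:
  assumes "tau_star p r" "\<And>\<alpha> r'. step p \<alpha> r' \<Longrightarrow> step P \<alpha> r'"
  shows "r = p \<or> tau_star P r"
  using assms unfolding tau_star_def
  by (cases rule: converse_rtranclpE) (auto intro: converse_rtranclp_into_rtranclp)

lemma wtrace_lift:
  assumes "wtrace p s r" "\<And>\<alpha> r'. step p \<alpha> r' \<Longrightarrow> step P \<alpha> r'"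
  shows "(s = [] \<and> r = p) \<or> wtrace P s r"
  using assms(1)
proof cases
  case wt_eps
  then show ?thesis using tau_star_lift[OF _ assms(2)] by (auto intro: wtrace.wt_eps)
next
  case (wt_cons m1 a m2 s')
  from tau_star_lift[OF \<open>tau_star p m1\<close> assms(2)] have "tau_star P m1 \<or> step P (Some a) m2"
    using \<open>step m1 (Some a) m2\<close> assms(2) by blast
  then show ?thesis using wt_cons by (blast intro: wtrace.wt_cons tau_star_refl)
qed

lemma wtrace_verdict: "wtrace m s r \<Longrightarrow> is_verdict m \<Longrightarrow> r = m"
  by (induction rule: wtrace.induct) (auto dest: tau_star_verdict step_verdict_cases)

lemma wtrace_verdict_self: "is_verdict v \<Longrightarrow> wtrace v s v"
  by (induction s) (auto intro: wt_eps wt_cons tau_star_refl st_verd)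

lemma verdict_lang_Act: "conclusive c \<Longrightarrow> verdict_lang c (Act a p) = (Cons a) ` verdict_lang c p"
  unfolding verdict_lang_def conclusive_def by (auto dest: wtrace_Act intro: wtrace_ActI)

lemma verdict_lang_Plus:
  assumes "conclusive c"
  shows "verdict_lang c (Plus p q) = verdict_lang c p \<union> verdict_lang c q"
proof -
  have verdict: "is_verdict c" using assms by (auto simp: conclusive_def)
  have "tau_star (Plus c q') c" "tau_star (Plus q' c) c" for q'
    unfolding tau_star_def using st_sumL[OF st_verd[OF verdict]] st_sumR[OF st_verd[OF verdict]]
    by (blast intro: r_into_rtranclp)+
  then have "wtrace (Plus c q') [] c" "wtrace (Plus q' c) [] c" for q'
    by (blast intro: wt_eps)+
  with assms show ?thesis
    unfolding verdict_lang_def conclusive_def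
    by (auto dest: wtrace_Plus wtrace_lift[where P = "Plus p q"] wtrace_lift[where P = "Plus q p"]
        intro: st_sumL st_sumR)
qed

lemma verdict_lang_self: "conclusive c \<Longrightarrow> verdict_lang c c = UNIV"
  unfolding verdict_lang_def conclusive_def by (auto intro: wtrace_verdict_self)

lemma verdict_lang_other: "is_verdict v \<Longrightarrow> v \<noteq> c \<Longrightarrow> verdict_lang c v = {}"
  unfolding verdict_lang_def by (auto dest: wtrace_verdict)

lemma verdict_lang_End: "conclusive c \<Longrightarrow> verdict_lang c End = {}"
  by (rule verdict_lang_other) (auto simp: conclusive_def)

lemma pref_Nil [simp]: "pref [] m = m"
  by (simp add: pref_def)

lemma pref_Cons [simp]: "pref (a # s) m = Act a (pref s m)"
  by (simp add: pref_def)

lemma pref_append: "pref (s @ t) m = pref s (pref t m)"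
  by (simp add: pref_def)

lemma closed_pref: "closed m \<Longrightarrow> closed (pref s m)"
  by (induction s) auto

lemma verdict_lang_pref: "conclusive c \<Longrightarrow> verdict_lang c (pref s p) = (\<lambda>v. s @ v) ` verdict_lang c p"
  by (induction s) (auto simp: verdict_lang_Act image_image)

fun paths :: "('a, 'x) mon \<Rightarrow> ('a list \<times> ('a, 'x) mon) list" where
  "paths End = []"
| "paths Yes = [([], Yes)]"
| "paths No = [([], No)]"
| "paths (Var x) = [([], Var x)]"
| "paths (Act a m) = map (\<lambda>(s, l). (a # s, l)) (paths m)"
| "paths (Plus m n) = paths m @ paths n"

fun depth :: "('a, 'x) mon \<Rightarrow> nat" where
  "depth (Act a m) = Suc (depth m)"
| "depth (Plus m n) = max (depth m) (depth n)"
| "depth _ = 0"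

definition path_term :: "'a list \<times> ('a, 'x) mon \<Rightarrow> ('a, 'x) mon" where
  "path_term p = pref (fst p) (snd p)"

lemma paths_leaf: "(s, l) \<in> set (paths m) \<Longrightarrow> l = Yes \<or> l = No \<or> (\<exists>x. l = Var x)"
  by (induction m arbitrary: s) auto

lemma length_paths_le_depth: "(s, l) \<in> set (paths m) \<Longrightarrow> length s \<le> depth m"
  by (induction m arbitrary: s) fastforce+

lemma verdict_lang_subst_paths:
  assumes "conclusive c"
  shows "verdict_lang c (subst \<sigma> m) =
    (\<Union>(s, l)\<in>set (paths m). (\<lambda>v. s @ v) ` verdict_lang c (subst \<sigma> l))"
  using assms
proof (induction m)
  case End
  then show ?case by (simp add: verdict_lang_End)
next
  case (Act a m)
  then show ?case by (simp add: verdict_lang_Act image_UN image_image split_def)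
next
  case (Plus m1 m2)
  then show ?case by (simp add: verdict_lang_Plus)
qed auto

lemma verdict_lang_subst_leaf:
  assumes "(t, l) \<in> set (paths n)" "conclusive c" "verdict_lang c (subst \<sigma> l) \<noteq> {}"
  shows "l = c \<or> (\<exists>y. l = Var y \<and> verdict_lang c (\<sigma> y) \<noteq> {})"
  using paths_leaf[OF assms(1)] assms(2,3) verdict_lang_other[of Yes c] verdict_lang_other[of No c]
  by (auto simp: conclusive_def)

declare deriv.trans [trans]

lemma deriv_sumL_append: "deriv (sumL (xs @ ys)) (Plus (sumL xs) (sumL ys))"
proof (induction xs)
  case Nil
  have "deriv (sumL ys) (Plus (sumL ys) End)" by (rule deriv.sym[OF deriv.A4])
  also have "deriv \<dots> (Plus End (sumL ys))" by (rule deriv.A1)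
  finally show ?case by simp
next
  case (Cons x xs)
  have "deriv (Plus x (sumL (xs @ ys))) (Plus x (Plus (sumL xs) (sumL ys)))"
    by (rule deriv.cong_plus[OF deriv.refl Cons])
  also have "deriv \<dots> (Plus (Plus x (sumL xs)) (sumL ys))" by (rule deriv.A2)
  finally show ?case by simp
qed

lemma deriv_sumL_absorb_member: "x \<in> set ys \<Longrightarrow> deriv (Plus (sumL ys) x) (sumL ys)"
proof (induction ys)
  case (Cons y ys)
  have "deriv (Plus (Plus y (sumL ys)) x) (Plus y (Plus (sumL ys) x))"
    by (rule deriv.sym[OF deriv.A2])
  also have "deriv \<dots> (Plus y (sumL ys))"
  proof (cases "x = y")
    case True
    have "deriv (Plus y (Plus (sumL ys) y)) (Plus y (Plus y (sumL ys)))"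
      by (rule deriv.cong_plus[OF deriv.refl deriv.A1])
    also have "deriv \<dots> (Plus (Plus y y) (sumL ys))" by (rule deriv.A2)
    also have "deriv \<dots> (Plus y (sumL ys))" by (rule deriv.cong_plus[OF deriv.A3 deriv.refl])
    finally show ?thesis using True by simp
  next
    case False
    with Cons show ?thesis by (auto intro: deriv.cong_plus deriv.refl)
  qed
  finally show ?case by simp
qed simp

lemma deriv_absorb_sumL:
  "(\<And>t. t \<in> set ts \<Longrightarrow> deriv (Plus S t) S) \<Longrightarrow> deriv (Plus S (sumL ts)) S"
proof (induction ts)
  case Nil
  then show ?case by (simp add: deriv.A4)
next
  case (Cons t ts)
  have "deriv (Plus S (Plus t (sumL ts))) (Plus (Plus S t) (sumL ts))" by (rule deriv.A2)
  also have "deriv \<dots> (Plus S (sumL ts))" by (rule deriv.cong_plus[OF Cons.prems deriv.refl]) simp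
  also have "deriv \<dots> S" using Cons by simp
  finally show ?case by simp
qed

lemma deriv_sumL_absorb_subset:
  "set xs \<subseteq> set ys \<Longrightarrow> deriv (Plus (sumL ys) (sumL xs)) (sumL ys)"
  by (rule deriv_absorb_sumL) (auto intro: deriv_sumL_absorb_member)

lemma deriv_sumL_set_eq: "set xs = set ys \<Longrightarrow> deriv (sumL xs) (sumL ys)"
proof -
  assume eq: "set xs = set ys"
  have "deriv (sumL xs) (Plus (sumL xs) (sumL ys))"
    using deriv_sumL_absorb_subset[of ys xs] eq by (simp add: deriv.sym)
  also have "deriv \<dots> (Plus (sumL ys) (sumL xs))" by (rule deriv.A1)
  also have "deriv \<dots> (sumL ys)" using deriv_sumL_absorb_subset[of xs ys] eq by simp
  finally show ?thesis .
qed

lemma deriv_sumL_map_cong: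
  "(\<And>x. x \<in> set xs \<Longrightarrow> deriv (f x) (g x)) \<Longrightarrow> deriv (sumL (map f xs)) (sumL (map g xs))"
  by (induction xs) (auto intro: deriv.cong_plus deriv.refl)

lemma deriv_sumL_concat: "deriv (sumL (concat xss)) (sumL (map sumL xss))"
proof (induction xss)
  case (Cons xs xss)
  have "deriv (sumL (xs @ concat xss)) (Plus (sumL xs) (sumL (concat xss)))"
    by (rule deriv_sumL_append)
  also have "deriv \<dots> (Plus (sumL xs) (sumL (map sumL xss)))"
    by (rule deriv.cong_plus[OF deriv.refl Cons])
  finally show ?case by simp
qed (simp add: deriv.refl)

lemma deriv_Act_sumL: "deriv (Act a (sumL xs)) (sumL (map (Act a) xs))"
proof (induction xs)
  case (Cons x xs)
  have "deriv (Act a (Plus x (sumL xs))) (Plus (Act a x) (Act a (sumL xs)))" by (rule deriv.D_a)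
  also have "deriv \<dots> (Plus (Act a x) (sumL (map (Act a) xs)))"
    by (rule deriv.cong_plus[OF deriv.refl Cons])
  finally show ?case by simp
qed (simp add: deriv.E_a)

lemma deriv_pref_cong: "deriv m n \<Longrightarrow> deriv (pref s m) (pref s n)"
  by (induction s) (auto intro: deriv.cong_act)

lemma deriv_pref_sumL: "deriv (pref s (sumL xs)) (sumL (map (pref s) xs))"
proof (induction s)
  case (Cons a s)
  have "deriv (Act a (pref s (sumL xs))) (Act a (sumL (map (pref s) xs)))"
    using Cons by (rule deriv.cong_act)
  also have "deriv \<dots> (sumL (map (Act a) (map (pref s) xs)))" by (rule deriv_Act_sumL)
  finally show ?case by (simp add: comp_def)
qed (simp add: deriv.refl)

lemma deriv_pref_Plus: "deriv (pref s (Plus m n)) (Plus (pref s m) (pref s n))"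
proof -
  have "deriv (pref s (Plus m n)) (pref s (Plus m (Plus n End)))"
    by (rule deriv_pref_cong[OF deriv.cong_plus[OF deriv.refl deriv.sym[OF deriv.A4]]])
  also have "deriv \<dots> (Plus (pref s m) (Plus (pref s n) End))"
    using deriv_pref_sumL[of s "[m, n]"] by simp
  also have "deriv \<dots> (Plus (pref s m) (pref s n))"
    by (rule deriv.cong_plus[OF deriv.refl deriv.A4])
  finally show ?thesis .
qed

lemma deriv_sum_paths: "deriv m (sumL (map path_term (paths m)))"
proof (induction m)
  case (Act a m)
  have "deriv (Act a m) (Act a (sumL (map path_term (paths m))))"
    using Act by (rule deriv.cong_act)
  also have "deriv \<dots> (sumL (map (Act a) (map path_term (paths m))))" by (rule deriv_Act_sumL)
  also have "map (Act a) (map path_term (paths m)) = map path_term (paths (Act a m))"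
    by (auto simp: path_term_def split: prod.splits)
  finally show ?case .
next
  case (Plus m1 m2)
  have "deriv (Plus m1 m2)
      (Plus (sumL (map path_term (paths m1))) (sumL (map path_term (paths m2))))"
    by (rule deriv.cong_plus[OF Plus])
  also have "deriv \<dots> (sumL (map path_term (paths m1) @ map path_term (paths m2)))"
    by (rule deriv.sym[OF deriv_sumL_append])
  finally show ?case by simp
qed (auto simp: path_term_def intro: deriv.sym[OF deriv.A4] deriv.refl)

section \<open>The normal form\<close>

definition all_actions :: "'a::finite list" where
  "all_actions = (SOME xs. set xs = UNIV \<and> distinct xs)"

lemma set_all_actions: "set (all_actions :: 'a::finite list) = UNIV"
proof -
  have "\<exists>xs. set xs = (UNIV :: 'a set) \<and> distinct xs" by (rule finite_distinct_list) simp
  then show ?thesis unfolding all_actions_def by (metis (mono_tags, lifting) someI_ex)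
qed

lemma sumAct_eq_sumL: "sumAct (m :: ('a::finite, 'x) mon) = sumL (map (\<lambda>a. Act a m) all_actions)"
  by (simp add: sumAct_def sumSet_def all_actions_def)

fun words :: "nat \<Rightarrow> 'a::finite list list" where
  "words 0 = [[]]"
| "words (Suc k) = concat (map (\<lambda>a. map (Cons a) (words k)) all_actions)"

lemma set_words: "set (words k) = {w. length w = k}"
  by (induction k) (auto simp: set_all_actions length_Suc_conv)

lemma deriv_conclusive_sumAct: "conclusive c \<Longrightarrow> deriv c (sumAct (c :: ('a::finite, 'x) mon))"
  unfolding conclusive_def using deriv.Y_omega deriv.N_omega by blast

lemma deriv_conclusive_words:
  assumes "conclusive c"
  shows "deriv (c :: ('a::finite, 'x) mon) (sumL (map (\<lambda>u. pref u c) (words k)))"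
proof (induction k)
  case 0
  then show ?case by (simp add: deriv.sym[OF deriv.A4])
next
  case (Suc k)
  have "deriv c (sumL (map (\<lambda>a. Act a c) all_actions))"
    using deriv_conclusive_sumAct[OF assms] by (simp add: sumAct_eq_sumL)
  also have "deriv \<dots> (sumL (map (\<lambda>a. Act a (sumL (map (\<lambda>u. pref u c) (words k)))) all_actions))"
    by (rule deriv_sumL_map_cong) (rule deriv.cong_act[OF Suc.IH])
  also have "deriv \<dots> (sumL (map (\<lambda>a. sumL (map (Act a) (map (\<lambda>u. pref u c) (words k)))) all_actions))"
    by (rule deriv_sumL_map_cong) (rule deriv_Act_sumL)
  also have "\<dots> = sumL (map sumL (map (\<lambda>a. map (\<lambda>u. pref (a # u) c) (words k)) all_actions))"
    by (simp add: comp_def)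
  also have "deriv \<dots> (sumL (concat (map (\<lambda>a. map (\<lambda>u. pref (a # u) c) (words k)) all_actions)))"
    by (rule deriv.sym[OF deriv_sumL_concat])
  also have "\<dots> = sumL (map (\<lambda>u. pref u c) (words (Suc k)))"
    by (simp add: map_concat comp_def)
  finally show ?case .
qed

lemma deriv_pref_conclusive_words:
  assumes "conclusive c"
  shows "deriv (pref s (c :: ('a::finite, 'x) mon)) (sumL (map (\<lambda>u. pref (s @ u) c) (words k)))"
proof -
  have "deriv (pref s c) (pref s (sumL (map (\<lambda>u. pref u c) (words k))))"
    by (rule deriv_pref_cong[OF deriv_conclusive_words[OF assms]])
  also have "deriv \<dots> (sumL (map (pref s) (map (\<lambda>u. pref u c) (words k))))"
    by (rule deriv_pref_sumL)
  finally show ?thesis by (simp add: comp_def pref_append)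
qed

definition verdict_words ::
    "nat \<Rightarrow> ('a::finite, 'x) mon \<Rightarrow> ('a list \<times> ('a, 'x) mon) list \<Rightarrow> 'a list list" where
  "verdict_words L c R = filter (\<lambda>w. \<exists>p\<in>set R. snd p = c \<and> prefix (fst p) w) (words L)"

definition saturated :: "nat \<Rightarrow> ('a::finite list \<times> ('a, 'x) mon) list \<Rightarrow> 'a list \<Rightarrow> bool" where
  "saturated L R s \<longleftrightarrow> (\<forall>u. length u = L - length s \<longrightarrow>
     s @ u \<in> set (verdict_words L Yes R) \<and> s @ u \<in> set (verdict_words L No R))"

definition expand_path ::
    "nat \<Rightarrow> 'a::finite list \<times> ('a, 'x) mon \<Rightarrow> ('a list \<times> ('a, 'x) mon) list" where
  "expand_path L p = (if conclusive (snd p)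
     then map (\<lambda>u. (fst p @ u, snd p)) (words (L - length (fst p))) else [p])"

definition normal_paths ::
    "nat \<Rightarrow> ('a::finite list \<times> ('a, 'x) mon) list \<Rightarrow> ('a list \<times> ('a, 'x) mon) list" where
  "normal_paths L R = map (\<lambda>w. (w, Yes)) (verdict_words L Yes R)
     @ map (\<lambda>w. (w, No)) (verdict_words L No R)
     @ filter (\<lambda>p. \<not> conclusive (snd p) \<and> \<not> saturated L R (fst p)) R"

definition absorbed_paths ::
    "nat \<Rightarrow> ('a::finite list \<times> ('a, 'x) mon) list \<Rightarrow> ('a list \<times> ('a, 'x) mon) list" where
  "absorbed_paths L R = filter (\<lambda>p. \<not> conclusive (snd p) \<and> saturated L R (fst p)) R"

lemma verdict_words_iff:
  "w \<in> set (verdict_words L c R) \<longleftrightarrow> length w = L \<and> (\<exists>p\<in>set R. snd p = c \<and> prefix (fst p) w)"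
  by (auto simp: verdict_words_def set_words)

lemma deriv_expand_paths:
  "deriv (sumL (map path_term R)) (sumL (map path_term (concat (map (expand_path L) R))))"
proof -
  have "deriv (sumL (map path_term R)) (sumL (map (\<lambda>p. sumL (map path_term (expand_path L p))) R))"
  proof (rule deriv_sumL_map_cong)
    fix p :: "'a list \<times> ('a, 'b) mon"
    show "deriv (path_term p) (sumL (map path_term (expand_path L p)))"
      by (cases "conclusive (snd p)")
        (simp_all add: expand_path_def path_term_def comp_def deriv_pref_conclusive_words
          deriv.sym[OF deriv.A4])
  qed
  also have "\<dots> = sumL (map sumL (map (\<lambda>p. map path_term (expand_path L p)) R))"
    by (simp add: comp_def)
  also have "deriv \<dots> (sumL (concat (map (\<lambda>p. map path_term (expand_path L p)) R)))"
    by (rule deriv.sym[OF deriv_sumL_concat])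
  also have "\<dots> = sumL (map path_term (concat (map (expand_path L) R)))"
    by (simp add: map_concat comp_def)
  finally show ?thesis .
qed

lemma set_expand_paths:
  assumes "\<forall>p\<in>set R. length (fst p) \<le> L"
  shows "set (concat (map (expand_path L) R)) = set (normal_paths L R @ absorbed_paths L R)"
proof (intro set_eqI iffI)
  fix x
  assume "x \<in> set (concat (map (expand_path L) R))"
  then obtain p where p: "p \<in> set R" "x \<in> set (expand_path L p)" by auto
  show "x \<in> set (normal_paths L R @ absorbed_paths L R)"
  proof (cases "conclusive (snd p)")
    case True
    then obtain u where u: "x = (fst p @ u, snd p)" "length u = L - length (fst p)"
      using p by (auto simp: expand_path_def set_words)
    then have "fst x \<in> set (verdict_words L (snd p) R)"
      using p assms by (auto simp: verdict_words_iff)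
    then show ?thesis using True u unfolding normal_paths_def conclusive_def by auto
  qed (use p in \<open>auto simp: expand_path_def normal_paths_def absorbed_paths_def\<close>)
next
  fix x
  assume x: "x \<in> set (normal_paths L R @ absorbed_paths L R)"
  show "x \<in> set (concat (map (expand_path L) R))"
  proof (cases "conclusive (snd x)")
    case True
    then have "fst x \<in> set (verdict_words L (snd x) R)"
      using x by (auto simp: normal_paths_def absorbed_paths_def conclusive_def)
    then obtain p u where p: "p \<in> set R" "snd p = snd x" "fst x = fst p @ u" "length (fst x) = L"
      by (auto simp: verdict_words_iff prefix_def)
    then have "x \<in> set (expand_path L p)" using True
      by (auto simp: expand_path_def set_words image_iff intro!: exI[of _ u] prod_eqI)
    then show ?thesis using p by auto
  next
    case False
    then have "x \<in> set R" using x by (auto simp: normal_paths_def absorbed_paths_def conclusive_def)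
    then show ?thesis using False by (force simp: expand_path_def)
  qed
qed

text \<open>Axiom O1 lets \<open>s.(yes + no)\<close>, hence all its length-\<open>L\<close> expansions, absorb any \<open>s.l\<close>.\<close>

lemma deriv_absorb_saturated:
  assumes "saturated L R s" "length s \<le> L"
  shows "deriv (Plus (sumL (map path_term (normal_paths L R))) (pref s l))
           (sumL (map path_term (normal_paths L R)))"
proof -
  define E where "E c = map (\<lambda>u. pref (s @ u) c) (words (L - length s))" for c :: "('a, 'b) mon"
  define S where "S = sumL (map path_term (normal_paths L R))"
  have sub: "set (E Yes @ E No) \<subseteq> set (map path_term (normal_paths L R))"
  proof
    fix t
    assume "t \<in> set (E Yes @ E No)"
    then obtain u c where u: "length u = L - length s" "t = pref (s @ u) c" "c = Yes \<or> c = No"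
      by (auto simp: E_def set_words)
    then have "(s @ u, c) \<in> set (normal_paths L R)"
      using assms(1) by (auto simp: saturated_def normal_paths_def)
    then show "t \<in> set (map path_term (normal_paths L R))" using u by (force simp: path_term_def)
  qed
  let ?X = "pref s (Plus Yes No)"
  have "deriv ?X (Plus (pref s Yes) (pref s No))" by (rule deriv_pref_Plus)
  also have "deriv \<dots> (Plus (sumL (E Yes)) (sumL (E No)))"
    unfolding E_def by (intro deriv.cong_plus deriv_pref_conclusive_words) (auto simp: conclusive_def)
  also have "deriv \<dots> (sumL (E Yes @ E No))" by (rule deriv.sym[OF deriv_sumL_append])
  finally have X: "deriv ?X (sumL (E Yes @ E No))" .
  have "deriv ?X (pref s (Plus (Plus Yes No) l))" by (rule deriv_pref_cong[OF deriv.O1])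
  also have "deriv \<dots> (Plus ?X (pref s l))" by (rule deriv_pref_Plus)
  finally have "deriv ?X (Plus ?X (pref s l))" .
  then have absorb: "deriv (Plus (sumL (E Yes @ E No)) (pref s l)) (sumL (E Yes @ E No))"
    using X by (meson deriv.sym deriv.trans deriv.cong_plus deriv.refl)
  have "deriv (Plus S (pref s l)) (Plus (Plus S (sumL (E Yes @ E No))) (pref s l))"
    unfolding S_def by (rule deriv.cong_plus[OF deriv.sym[OF deriv_sumL_absorb_subset[OF sub]] deriv.refl])
  also have "deriv \<dots> (Plus S (Plus (sumL (E Yes @ E No)) (pref s l)))" by (rule deriv.sym[OF deriv.A2])
  also have "deriv \<dots> (Plus S (sumL (E Yes @ E No)))" by (rule deriv.cong_plus[OF deriv.refl absorb])
  also have "deriv \<dots> S" unfolding S_def by (rule deriv_sumL_absorb_subset[OF sub])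
  finally show ?thesis unfolding S_def .
qed

lemma deriv_normal_form:
  assumes "depth m \<le> L"
  shows "deriv (m :: ('a::finite, 'x) mon) (sumL (map path_term (normal_paths L (paths m))))"
proof -
  let ?P = "paths m"
  have len: "\<forall>p\<in>set ?P. length (fst p) \<le> L"
    using assms length_paths_le_depth by fastforce
  have "deriv m (sumL (map path_term ?P))" by (rule deriv_sum_paths)
  also have "deriv \<dots> (sumL (map path_term (concat (map (expand_path L) ?P))))"
    by (rule deriv_expand_paths)
  also have "deriv \<dots> (sumL (map path_term (normal_paths L ?P @ absorbed_paths L ?P)))"
    by (rule deriv_sumL_set_eq) (simp only: set_map set_expand_paths[OF len])
  also have "deriv \<dots> (Plus (sumL (map path_term (normal_paths L ?P)))
                           (sumL (map path_term (absorbed_paths L ?P))))"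
    by (simp add: deriv_sumL_append)
  also have "deriv \<dots> (sumL (map path_term (normal_paths L ?P)))"
  proof (rule deriv_absorb_sumL)
    fix t
    assume "t \<in> set (map path_term (absorbed_paths L ?P))"
    then obtain p where "p \<in> set ?P" "saturated L ?P (fst p)" "t = pref (fst p) (snd p)"
      by (auto simp: absorbed_paths_def path_term_def)
    then show "deriv (Plus (sumL (map path_term (normal_paths L ?P))) t)
                 (sumL (map path_term (normal_paths L ?P)))"
      using deriv_absorb_saturated[of L ?P "fst p" "snd p"] len by auto
  qed
  finally show ?thesis .
qed

section \<open>The normal form is determined by the \<open>\<omega>\<close>-languages\<close>

lemma omega_eq_sym: "omega_eq m n \<Longrightarrow> omega_eq n m"
  by (simp add: omega_eq_def omega_eq_closed_def)

lemma omega_eq_verdict_lang: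
  fixes \<sigma> :: "'x \<Rightarrow> ('a, 'x) mon"
  assumes "omega_eq m n" "conclusive c" "\<forall>x. closed (\<sigma> x)"
  shows "omega_ext (verdict_lang c (subst \<sigma> m)) = omega_ext (verdict_lang c (subst \<sigma> n))"
  using assms unfolding omega_eq_def omega_eq_closed_def La_def Lr_def verdict_lang_def conclusive_def
  by auto

text \<open>Extending \<open>w\<close> by \<open>d\<^sup>\<omega>\<close> gives an infinite word in the \<open>\<omega>\<close>-language of \<open>m\<close>, so some
  finite prefix of it reaches \<open>c\<close> in \<open>n\<close>, along one of the paths of \<open>n\<close>.\<close>

lemma omega_eq_path_prefix:
  fixes \<sigma> :: "'x \<Rightarrow> ('a, 'x) mon"
  assumes "omega_eq m n" "conclusive c" "\<forall>x. closed (\<sigma> x)"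
    and "w \<in> verdict_lang c (subst \<sigma> m)"
  obtains t l y K where "(t, l) \<in> set (paths n)" "y \<in> verdict_lang c (subst \<sigma> l)"
    and "prefix (t @ y) (w @ replicate K d)"
proof -
  define z where "z i = (if i < length w then w ! i else d)" for i
  have "z \<in> omega_ext (verdict_lang c (subst \<sigma> m))"
    using assms(4) by (auto simp: omega_ext_def z_def)
  then have "z \<in> omega_ext (verdict_lang c (subst \<sigma> n))"
    using omega_eq_verdict_lang[OF assms(1-3)] by simp
  then obtain v where v: "v \<in> verdict_lang c (subst \<sigma> n)" "\<forall>i<length v. z i = v ! i"
    by (auto simp: omega_ext_def)
  have "take (length v) (w @ replicate (length v) d) = v"
  proof (rule nth_equalityI)
    fix i
    assume "i < length (take (length v) (w @ replicate (length v) d))"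
    then show "take (length v) (w @ replicate (length v) d) ! i = v ! i"
      using v(2)[rule_format, of i] by (auto simp: z_def nth_append)
  qed simp
  then have "prefix v (w @ replicate (length v) d)" by (metis take_is_prefix)
  moreover obtain t l y where "(t, l) \<in> set (paths n)" "v = t @ y"
      "y \<in> verdict_lang c (subst \<sigma> l)"
    using v(1) verdict_lang_subst_paths[OF assms(2)] by blast
  ultimately show thesis using that by blast
qed

lemma verdict_words_mono:
  assumes "omega_eq m n" "conclusive c" "depth n \<le> L"
    and "w \<in> set (verdict_words L c (paths (m :: ('a::finite, 'x) mon)))"
  shows "w \<in> set (verdict_words L c (paths n))"
proof -
  define \<sigma> where "\<sigma> = (\<lambda>_::'x. End :: ('a, 'x) mon)"
  have closed: "\<forall>x. closed (\<sigma> x)" by (simp add: \<sigma>_def)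
  from assms(4) obtain s u where p: "(s, c) \<in> set (paths m)" "w = s @ u" "length w = L"
    by (auto simp: verdict_words_iff prefix_def)
  have "u \<in> verdict_lang c (subst \<sigma> c)"
    using assms(2) by (auto simp: verdict_lang_self conclusive_def)
  then have "w \<in> (\<lambda>v. s @ v) ` verdict_lang c (subst \<sigma> c)" using p(2) by blast
  then have "w \<in> verdict_lang c (subst \<sigma> m)"
    using p(1) by (subst verdict_lang_subst_paths[OF assms(2)]) force
  then obtain t l y K where q: "(t, l) \<in> set (paths n)" "y \<in> verdict_lang c (subst \<sigma> l)"
      "prefix (t @ y) (w @ replicate K undefined)"
    using omega_eq_path_prefix[OF assms(1,2) closed, where d = undefined] by blast
  have "l = c"
    using verdict_lang_subst_leaf[OF q(1) assms(2)] q(2) verdict_lang_End[OF assms(2)]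
    by (auto simp: \<sigma>_def)
  have "length t \<le> length w" using length_paths_le_depth[OF q(1)] assms(3) p(3) by simp
  then have "prefix t w"
    using prefix_length_prefix[OF append_prefixD[OF q(3)]] by simp
  then show ?thesis using q(1) p(3) \<open>l = c\<close> by (force simp: verdict_words_iff)
qed

lemma nth_marker_eq:
  "a \<noteq> b \<Longrightarrow> j < L + Suc K \<Longrightarrow> (replicate L a @ b # replicate K a) ! j = b \<Longrightarrow> j = L"
  by (cases "j < L") (auto simp: nth_append nth_Cons' split: if_splits)

lemma marker_prefix_length:
  assumes "a \<noteq> b" "length s \<le> L"
    and "prefix (t @ u @ replicate L a @ [b]) (s @ u @ replicate L a @ b # replicate K a)"
  shows "length t = length s"
proof -
  define p where "p = length t + length u + L"
  obtain zs where W: "s @ u @ replicate L a @ b # replicate K a = (t @ u @ replicate L a) @ b # zs"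
    using assms(3) by (auto simp: prefix_def)
  moreover have "length (t @ u @ replicate L a) = p" by (simp add: p_def)
  ultimately have "(s @ u @ replicate L a @ b # replicate K a) ! p = b"
    by (metis nth_append_length)
  moreover have "p = length (s @ u) + (p - length (s @ u))" using assms(2) by (simp add: p_def)
  ultimately have "(replicate L a @ b # replicate K a) ! (p - length (s @ u)) = b"
    by (metis append.assoc nth_append_length_plus)
  moreover have "p - length (s @ u) < L + Suc K"
    using arg_cong[OF W, of length] by (simp add: p_def)
  ultimately have "p - length (s @ u) = L" using nth_marker_eq[OF assms(1)] by blast
  then show ?thesis using assms(2) by (simp add: p_def)
qed

lemma omega_eq_subst_var_path:
  fixes m n :: "('a, 'x) mon"
  assumes "omega_eq m n" "conclusive c" and path: "(s, Var x) \<in> set (paths m)"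
  obtains t l y K where "(t, l) \<in> set (paths n)" "prefix (t @ y) (s @ v @ replicate K d)"
    and "l = c \<or> (l = Var x \<and> y \<in> verdict_lang c (pref v c))"
proof -
  define \<sigma> where "\<sigma> = (\<lambda>_::'x. End :: ('a, 'x) mon)(x := pref v c)"
  have closed: "\<forall>y. closed (\<sigma> y)"
    using assms(2) by (auto simp: \<sigma>_def conclusive_def intro: closed_pref)
  have "v \<in> verdict_lang c (subst \<sigma> (Var x))"
    using verdict_lang_pref[OF assms(2), of v c] verdict_lang_self[OF assms(2)] by (force simp: \<sigma>_def)
  then have "s @ v \<in> (\<lambda>w. s @ w) ` verdict_lang c (subst \<sigma> (Var x))" by blast
  then have "s @ v \<in> verdict_lang c (subst \<sigma> m)"
    using path by (subst verdict_lang_subst_paths[OF assms(2)]) force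
  then obtain t l y K where q: "(t, l) \<in> set (paths n)" "y \<in> verdict_lang c (subst \<sigma> l)"
      and "prefix (t @ y) (s @ v @ replicate K d)"
    using omega_eq_path_prefix[OF assms(1,2) closed] by (metis append.assoc)
  moreover have "l = c \<or> (l = Var x \<and> y \<in> verdict_lang c (pref v c))"
    using verdict_lang_subst_leaf[OF q(1) assms(2)] q(2) verdict_lang_End[OF assms(2)]
    by (fastforce simp: \<sigma>_def split: if_splits)
  ultimately show thesis using that by blast
qed

text \<open>An unsaturated variable path \<open>s.x\<close> of \<open>m\<close> is detected by substituting for \<open>x\<close> the word
  \<open>u a\<^sup>L b\<close> into a verdict missing at \<open>s u\<close>: the marker \<open>b\<close> forces any path of \<open>n\<close> that
  accepts \<open>s u a\<^sup>L b a\<^sup>\<omega>\<close> through \<open>x\<close> to have length \<open>|s|\<close>.\<close>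

lemma var_path_mem:
  fixes m n :: "('a::finite, 'x) mon" and a b :: 'a
  assumes "omega_eq m n" "a \<noteq> b" "depth m \<le> L" "depth n \<le> L"
    and path: "(s, Var x) \<in> set (paths m)" and "\<not> saturated L (paths m) s"
  shows "(s, Var x) \<in> set (paths n)"
proof -
  obtain u c where u: "length u = L - length s" "conclusive c"
      "s @ u \<notin> set (verdict_words L c (paths m))"
    using assms(6) unfolding saturated_def conclusive_def by blast
  have s: "length s \<le> L" using length_paths_le_depth[OF path] assms(3) by simp
  define v where "v = u @ replicate L a @ [b]"
  obtain t l y K where q: "(t, l) \<in> set (paths n)" and pre: "prefix (t @ y) (s @ v @ replicate K a)"
      and "l = c \<or> (l = Var x \<and> y \<in> verdict_lang c (pref v c))"
    using omega_eq_subst_var_path[OF assms(1) u(2) path] by blast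
  then consider "l = c" | "l = Var x" "y \<in> verdict_lang c (pref v c)" by blast
  then show ?thesis
  proof cases
    case 1
    have "prefix (s @ u) (s @ v @ replicate K a)" by (simp add: v_def)
    moreover have "length t \<le> length (s @ u)"
      using length_paths_le_depth[OF q] assms(4) s u(1) by simp
    ultimately have "prefix t (s @ u)" using prefix_length_prefix[OF append_prefixD[OF pre]] by blast
    then have "s @ u \<in> set (verdict_words L c (paths n))"
      using q 1 s u(1) by (force simp: verdict_words_iff)
    then show ?thesis
      using verdict_words_mono[OF omega_eq_sym[OF assms(1)] u(2) assms(3)] u(3) by blast
  next
    case 2
    then obtain r where "y = v @ r" using verdict_lang_pref[OF u(2)] by blast
    then have "prefix (t @ v) (s @ v @ replicate K a)"
      using pre by (metis append.assoc append_prefixD)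
    then have "prefix (t @ u @ replicate L a @ [b]) (s @ u @ replicate L a @ b # replicate K a)"
      by (simp only: v_def append.assoc append_Cons append_Nil)
    then have "length t = length s" using marker_prefix_length[OF assms(2) s] by blast
    moreover have "prefix t (s @ v @ replicate K a)" using append_prefixD[OF pre] .
    moreover have "prefix s (s @ v @ replicate K a)" by simp
    ultimately have "t = s" by (metis prefix_length_prefix prefix_order.antisym order_refl)
    then show ?thesis using q 2 by simp
  qed
qed

lemma normal_paths_eq:
  fixes m n :: "('a::finite, 'x) mon" and a b :: 'a
  assumes "omega_eq m n" "a \<noteq> b" "depth m \<le> L" "depth n \<le> L"
  shows "set (normal_paths L (paths m)) = set (normal_paths L (paths n))"
proof -
  have sym: "omega_eq n m" using omega_eq_sym[OF assms(1)] .
  have words: "set (verdict_words L c (paths m)) = set (verdict_words L c (paths n))"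
    if "conclusive c" for c
    using verdict_words_mono[OF assms(1) that assms(4)] verdict_words_mono[OF sym that assms(3)]
    by blast
  then have saturated: "saturated L (paths m) = saturated L (paths n)"
    by (auto simp: saturated_def conclusive_def fun_eq_iff)
  have var_paths: "p \<in> set (paths n')"
    if eq: "omega_eq m' n'" "depth m' \<le> L" "depth n' \<le> L" and p: "p \<in> set (paths m')"
      "\<not> conclusive (snd p)" "\<not> saturated L (paths m') (fst p)" for m' n' :: "('a, 'x) mon" and p
  proof -
    obtain s x where "p = (s, Var x)"
      using paths_leaf[of "fst p" "snd p" m'] p(1,2) by (cases p) (auto simp: conclusive_def)
    then show ?thesis using var_path_mem[OF eq(1) assms(2) eq(2,3)] p(1,3) by simp
  qed
  show ?thesis
    unfolding normal_paths_def set_append set_map set_filter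
    using words[of Yes] words[of No] saturated var_paths[OF assms(1,3,4)] var_paths[OF sym assms(4,3)]
    by (auto simp: conclusive_def)
qed

theorem mainTheorem19:
  fixes m n :: "('a :: finite, 'x) mon"
  assumes "card (UNIV :: 'a set) \<ge> 2"
    and "omega_eq m n"
  shows "deriv m n"
proof -
  obtain a b :: 'a where ab: "a \<noteq> b"
    using assms(1) card_le_Suc0_iff_eq[of "UNIV :: 'a set"] by force
  define L where "L = max (depth m) (depth n)"
  have "deriv m (sumL (map path_term (normal_paths L (paths m))))"
    by (rule deriv_normal_form) (simp add: L_def)
  also have "deriv \<dots> (sumL (map path_term (normal_paths L (paths n))))"
    using normal_paths_eq[OF assms(2) ab, of L] by (intro deriv_sumL_set_eq) (simp add: L_def)
  also have "deriv \<dots> n"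
    by (rule deriv.sym, rule deriv_normal_form) (simp add: L_def)
  finally show ?thesis .
qed

end
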